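(* For each $a\in(0,1)$ there is a unique $b\in(0,1)$ such that $[(a,0)]=[(0,-b^2)]$. Moreover, the map $(0,1)\to(0,1)$ sending $a$ to this $b$ is a diffeomorphism of $(0,1)$.
   Context: $\mathbb{D}$ is the open unit disc and $\mathrm{Aut}(\mathbb{D})$ its holomorphic automorphism group. $\mathbb{G}=\{(z_1+z_2,z_1z_2):z_1,z_2\in\mathbb{D}\}$. For $\varphi\in\mathrm{Aut}(\mathbb{D})$, $H_\varphi(z_1+z_2,z_1z_2)=(\varphi(z_1)+\varphi(z_2),\varphi(z_1)\varphi(z_2))$. For $(s,p)\in\mathbb{G}$, $[(s,p)]=\{H_\varphi(s,p):\varphi\in\mathrm{Aut}(\mathbb{D})\}$ is its orbit. *)

theory Defs
  imports "HOL-Analysis.Analysis"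
begin

definition unit_disc :: "complex set" where
  "unit_disc = ball 0 1"

text \<open>Holomorphic automorphisms of the unit disc: holomorphic bijections of the disc onto itself
  (the inverse of such a map is automatically holomorphic).\<close>
definition disc_aut :: "(complex \<Rightarrow> complex) set" where
  "disc_aut = {\<phi>. \<phi> holomorphic_on unit_disc \<and> bij_betw \<phi> unit_disc unit_disc}"

definition symm_bidisc :: "(complex \<times> complex) set" where
  "symm_bidisc = {(z1 + z2, z1 * z2) | z1 z2. z1 \<in> unit_disc \<and> z2 \<in> unit_disc}"

definition symm_orbit :: "complex \<times> complex \<Rightarrow> (complex \<times> complex) set" where
  "symm_orbit sp = {(\<phi> z1 + \<phi> z2, \<phi> z1 * \<phi> z2) | \<phi> z1 z2.
      \<phi> \<in> disc_aut \<and> z1 \<in> unit_disc \<and> z2 \<in> unit_disc \<and> sp = (z1 + z2, z1 * z2)}"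

definition smooth_on :: "real set \<Rightarrow> (real \<Rightarrow> real) \<Rightarrow> bool" where
  "smooth_on S f \<longleftrightarrow> (\<forall>n. \<forall>x\<in>S. ((deriv ^^ n) f) differentiable (at x))"

definition real_diffeomorphism :: "real set \<Rightarrow> real set \<Rightarrow> (real \<Rightarrow> real) \<Rightarrow> bool" where
  "real_diffeomorphism S T f \<longleftrightarrow>
     bij_betw f S T \<and> smooth_on S f \<and> smooth_on T (inv_into S f)"

end

(* The pseudo-hyperbolic distance d z w = |z - w| / |1 - cnj w z| is not increased by holomorphic
   self-maps of the disc (Schwarz-Pick). Hence if (w1 + w2, w1 w2) lies in the orbit of
   (z1 + z2, z1 z2), then d w1 w2 <= d z1 z2, so d z1 z2 is an orbit invariant. It equals a for
   (a, 0) = (a + 0, a 0) and 2b / (1 + b^2) for (0, -b^2) = (b + (-b), b (-b)); conversely the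
   Moebius map z |-> (z + b) / (1 + b z) sends b, -b to 2b / (1 + b^2), 0. So the two orbits agree
   iff a = 2b / (1 + b^2), i.e. b = (1 - sqrt (1 - a^2)) / a. Both maps lie in the algebra generated
   by x, 1/x, sqrt (1 - x^2), 1/sqrt (1 - x^2) and 1/(1 + x^2), which is closed under
   differentiation on (0, 1); hence they are smooth there. *)

theory Submission
  imports Defs "HOL-Complex_Analysis.Complex_Analysis"
begin

lemma sum_prod_eq_cases:
  fixes z1 z2 w1 w2 :: "'a::idom"
  assumes sum: "z1 + z2 = w1 + w2" and prod: "z1 * z2 = w1 * w2"
  shows "(z1 = w1 \<and> z2 = w2) \<or> (z1 = w2 \<and> z2 = w1)"
proof -
  have "(z1 - w1) * (z1 - w2) = z1 * (z1 + z2 - (w1 + w2)) + (w1 * w2 - z1 * z2)"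
    by (simp add: algebra_simps)
  then have "(z1 - w1) * (z1 - w2) = 0"
    using sum prod by simp
  then show ?thesis
    using sum by auto
qed

lemma disc_aut_id: "(\<lambda>z. z) \<in> disc_aut"
  by (simp add: disc_aut_def bij_betw_id[unfolded id_def])

lemma disc_aut_compose:
  assumes \<phi>: "\<phi> \<in> disc_aut" and \<psi>: "\<psi> \<in> disc_aut"
  shows "\<phi> \<circ> \<psi> \<in> disc_aut"
proof -
  have "bij_betw (\<phi> \<circ> \<psi>) unit_disc unit_disc"
    using \<phi> \<psi> bij_betw_trans by (auto simp: disc_aut_def)
  moreover have "\<phi> \<circ> \<psi> holomorphic_on unit_disc"
    using \<phi> \<psi> by (intro holomorphic_on_compose_gen) (auto simp: disc_aut_def bij_betw_def)
  ultimately show ?thesis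
    by (simp add: disc_aut_def)
qed

lemma Moebius_function_in_unit_disc:
  "w \<in> unit_disc \<Longrightarrow> z \<in> unit_disc \<Longrightarrow> Moebius_function t w z \<in> unit_disc"
  using Moebius_function_norm_lt_1 by (simp add: unit_disc_def)

lemma Moebius_function_of_real:
  "Moebius_function 0 (complex_of_real w) (complex_of_real z) = complex_of_real ((z - w) / (1 - w * z))"
  by (simp add: Moebius_function_simple)

lemma Moebius_function_in_disc_aut:
  assumes "norm w < 1"
  shows "Moebius_function 0 w \<in> disc_aut"
  unfolding disc_aut_def unit_disc_def
proof (intro CollectI conjI)
  show "Moebius_function 0 w holomorphic_on ball 0 1"
    using Moebius_function_holomorphic[OF assms] .
  show "bij_betw (Moebius_function 0 w) (ball 0 1) (ball 0 1)"
    by (rule bij_betw_byWitness[where f' = "Moebius_function 0 (- w)"])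
       (use assms Moebius_function_compose Moebius_function_norm_lt_1 in auto)
qed

lemma symm_orbit_sum_prod:
  assumes "z1 \<in> unit_disc" "z2 \<in> unit_disc"
  shows "symm_orbit (z1 + z2, z1 * z2) = {(\<phi> z1 + \<phi> z2, \<phi> z1 * \<phi> z2) | \<phi>. \<phi> \<in> disc_aut}"
proof (intro equalityI subsetI)
  fix x assume "x \<in> symm_orbit (z1 + z2, z1 * z2)"
  then obtain \<phi> w1 w2 where \<phi>: "\<phi> \<in> disc_aut" and x: "x = (\<phi> w1 + \<phi> w2, \<phi> w1 * \<phi> w2)"
    and "z1 + z2 = w1 + w2" "z1 * z2 = w1 * w2"
    unfolding symm_orbit_def by auto
  then have "x = (\<phi> z1 + \<phi> z2, \<phi> z1 * \<phi> z2)"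
    using sum_prod_eq_cases[of z1 z2 w1 w2] by (auto simp: add.commute mult.commute)
  with \<phi> show "x \<in> {(\<phi> z1 + \<phi> z2, \<phi> z1 * \<phi> z2) | \<phi>. \<phi> \<in> disc_aut}"
    by blast
next
  fix x assume "x \<in> {(\<phi> z1 + \<phi> z2, \<phi> z1 * \<phi> z2) | \<phi>. \<phi> \<in> disc_aut}"
  with assms show "x \<in> symm_orbit (z1 + z2, z1 * z2)"
    unfolding symm_orbit_def by blast
qed

lemma symm_orbit_self:
  assumes "z1 \<in> unit_disc" "z2 \<in> unit_disc"
  shows "(z1 + z2, z1 * z2) \<in> symm_orbit (z1 + z2, z1 * z2)"
  using symm_orbit_sum_prod[OF assms] disc_aut_id by auto

lemma symm_orbit_image_subset:
  assumes \<psi>: "\<psi> \<in> disc_aut" and z: "z1 \<in> unit_disc" "z2 \<in> unit_disc"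
  shows "symm_orbit (\<psi> z1 + \<psi> z2, \<psi> z1 * \<psi> z2) \<subseteq> symm_orbit (z1 + z2, z1 * z2)"
proof
  fix x assume "x \<in> symm_orbit (\<psi> z1 + \<psi> z2, \<psi> z1 * \<psi> z2)"
  moreover have "\<psi> z1 \<in> unit_disc" "\<psi> z2 \<in> unit_disc"
    using \<psi> z by (auto simp: disc_aut_def bij_betw_def)
  ultimately obtain \<phi> where "\<phi> \<in> disc_aut" "x = (\<phi> (\<psi> z1) + \<phi> (\<psi> z2), \<phi> (\<psi> z1) * \<phi> (\<psi> z2))"
    by (auto simp: symm_orbit_sum_prod)
  then show "x \<in> symm_orbit (z1 + z2, z1 * z2)"
    using disc_aut_compose[OF _ \<psi>]
    by (auto simp: symm_orbit_sum_prod[OF z] intro!: exI[of _ "\<phi> \<circ> \<psi>"])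
qed

lemma symm_orbit_Moebius:
  assumes "norm w < 1" "z1 \<in> unit_disc" "z2 \<in> unit_disc"
  shows "symm_orbit (Moebius_function 0 w z1 + Moebius_function 0 w z2,
                     Moebius_function 0 w z1 * Moebius_function 0 w z2) = symm_orbit (z1 + z2, z1 * z2)"
    (is "symm_orbit (?M z1 + ?M z2, ?M z1 * ?M z2) = _")
proof
  show "symm_orbit (?M z1 + ?M z2, ?M z1 * ?M z2) \<subseteq> symm_orbit (z1 + z2, z1 * z2)"
    using symm_orbit_image_subset Moebius_function_in_disc_aut assms by blast
  have M: "?M z \<in> unit_disc" "Moebius_function 0 (- w) (?M z) = z" if "z \<in> unit_disc" for z
    using that assms Moebius_function_norm_lt_1 Moebius_function_compose[of "- w" w]
    by (auto simp: unit_disc_def)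
  show "symm_orbit (z1 + z2, z1 * z2) \<subseteq> symm_orbit (?M z1 + ?M z2, ?M z1 * ?M z2)"
    using symm_orbit_image_subset[OF Moebius_function_in_disc_aut[of "- w"] M(1) M(1)] assms M
    by simp
qed

definition pseudo_hyperbolic_dist :: "complex \<Rightarrow> complex \<Rightarrow> real" where
  "pseudo_hyperbolic_dist w z = norm (Moebius_function 0 w z)"

lemma pseudo_hyperbolic_dist_commute:
  "pseudo_hyperbolic_dist w z = pseudo_hyperbolic_dist z w"
proof -
  have "norm (1 - cnj w * z) = norm (1 - cnj z * w)"
    by (metis complex_cnj_cnj complex_cnj_diff complex_cnj_mult complex_cnj_one complex_mod_cnj
        mult.commute)
  moreover have "norm (z - w) = norm (w - z)"
    by (rule norm_minus_commute)
  ultimately show ?thesis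
    by (simp only: pseudo_hyperbolic_dist_def Moebius_function_simple norm_divide)
qed

lemma Schwarz_Pick:
  assumes holf: "f holomorphic_on unit_disc" and im: "f ` unit_disc \<subseteq> unit_disc"
    and w: "w \<in> unit_disc" and z: "z \<in> unit_disc"
  shows "pseudo_hyperbolic_dist (f w) (f z) \<le> pseudo_hyperbolic_dist w z"
proof -
  let ?M = "Moebius_function 0"
  define g where "g = ?M (f w) \<circ> f \<circ> ?M (- w)"
  have fw: "f w \<in> unit_disc" and mw: "- w \<in> unit_disc"
    using im w by (auto simp: unit_disc_def image_subset_iff)
  have M_hol: "?M u holomorphic_on unit_disc" if "u \<in> unit_disc" for u
    using that Moebius_function_holomorphic by (simp add: unit_disc_def)
  have fM_disc: "(f \<circ> ?M (- w)) \<xi> \<in> unit_disc" if "\<xi> \<in> unit_disc" for \<xi>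
    using im mw that Moebius_function_in_unit_disc by auto
  have g_disc: "g \<xi> \<in> unit_disc" if "\<xi> \<in> unit_disc" for \<xi>
    using fM_disc[OF that] fw Moebius_function_in_unit_disc by (simp add: g_def)
  have "f \<circ> ?M (- w) holomorphic_on unit_disc"
    using mw Moebius_function_in_unit_disc
    by (intro holomorphic_on_compose_gen[OF M_hol holf]) auto
  then have "g holomorphic_on unit_disc"
    unfolding g_def comp_assoc using fM_disc fw
    by (intro holomorphic_on_compose_gen[OF _ M_hol]) auto
  moreover have "g 0 = 0"
    by (simp add: g_def Moebius_function_of_zero Moebius_function_eq_zero)
  moreover have "?M w z \<in> unit_disc"
    using w z by (rule Moebius_function_in_unit_disc)
  moreover have "g (?M w z) = ?M (f w) (f z)"
    using Moebius_function_compose[of "- w" w z] w z by (simp add: g_def unit_disc_def)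
  ultimately show ?thesis
    using Schwarz_Lemma(1)[of g "?M w z"] g_disc
    by (simp add: pseudo_hyperbolic_dist_def unit_disc_def)
qed

lemma pseudo_hyperbolic_dist_le_of_symm_orbit:
  assumes z: "z1 \<in> unit_disc" "z2 \<in> unit_disc"
    and w: "(w1 + w2, w1 * w2) \<in> symm_orbit (z1 + z2, z1 * z2)"
  shows "pseudo_hyperbolic_dist w1 w2 \<le> pseudo_hyperbolic_dist z1 z2"
proof -
  obtain \<phi> where \<phi>: "\<phi> \<in> disc_aut" and "w1 + w2 = \<phi> z1 + \<phi> z2" "w1 * w2 = \<phi> z1 * \<phi> z2"
    using w by (auto simp: symm_orbit_sum_prod[OF z])
  then have "pseudo_hyperbolic_dist w1 w2 = pseudo_hyperbolic_dist (\<phi> z1) (\<phi> z2)"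
    using sum_prod_eq_cases[of w1 w2 "\<phi> z1" "\<phi> z2"]
    by (auto simp: pseudo_hyperbolic_dist_commute[of "\<phi> z1"])
  also have "\<dots> \<le> pseudo_hyperbolic_dist z1 z2"
    using \<phi> z by (intro Schwarz_Pick) (auto simp: disc_aut_def bij_betw_def)
  finally show ?thesis .
qed

(* tanh (2 artanh t) and tanh (artanh t / 2) *)
definition hyperbolic_double :: "real \<Rightarrow> real" where
  "hyperbolic_double t = 2 * t / (1 + t * t)"

definition hyperbolic_half :: "real \<Rightarrow> real" where
  "hyperbolic_half t = (1 - sqrt (1 - t * t)) / t"

lemma pseudo_hyperbolic_dist_of_real_0:
  "pseudo_hyperbolic_dist (complex_of_real a) 0 = \<bar>a\<bar>"
  by (simp add: pseudo_hyperbolic_dist_def Moebius_function_of_zero)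

lemma pseudo_hyperbolic_dist_of_real_minus:
  assumes "0 \<le> t"
  shows "pseudo_hyperbolic_dist (complex_of_real t) (- complex_of_real t) = hyperbolic_double t"
proof -
  have "pseudo_hyperbolic_dist (complex_of_real t) (complex_of_real (- t))
      = \<bar>(- t - t) / (1 + t * t)\<bar>"
    by (simp only: pseudo_hyperbolic_dist_def Moebius_function_of_real norm_of_real) simp
  also have "\<dots> = hyperbolic_double t"
    using assms by (simp add: hyperbolic_double_def add_nonneg_nonneg)
  finally show ?thesis
    by simp
qed

lemma symm_orbit_real_eq_iff:
  assumes a: "a \<in> {0<..<1}" and t: "t \<in> {0<..<1}"
  shows "symm_orbit (complex_of_real a, 0) = symm_orbit (0, - (complex_of_real t * complex_of_real t))
    \<longleftrightarrow> a = hyperbolic_double t"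
proof -
  let ?a = "complex_of_real a" and ?t = "complex_of_real t"
  have disc: "?a \<in> unit_disc" "0 \<in> unit_disc" "?t \<in> unit_disc" "- ?t \<in> unit_disc"
    using a t by (auto simp: unit_disc_def)
  have dist_a: "pseudo_hyperbolic_dist ?a 0 = a"
    and dist_t: "pseudo_hyperbolic_dist ?t (- ?t) = hyperbolic_double t"
    using a t
    by (simp_all add: pseudo_hyperbolic_dist_of_real_0 pseudo_hyperbolic_dist_of_real_minus)
  show ?thesis
  proof
    assume eq: "symm_orbit (?a, 0) = symm_orbit (0, - (?t * ?t))"
    have "(?t + - ?t, ?t * - ?t) \<in> symm_orbit (?a + 0, ?a * 0)"
      using eq symm_orbit_self[OF disc(3,4)] by simp
    then have "hyperbolic_double t \<le> a"
      using pseudo_hyperbolic_dist_le_of_symm_orbit[OF disc(1,2)] dist_a dist_t by metis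
    moreover have "(?a + 0, ?a * 0) \<in> symm_orbit (?t + - ?t, ?t * - ?t)"
      using eq symm_orbit_self[OF disc(1,2)] by simp
    then have "a \<le> hyperbolic_double t"
      using pseudo_hyperbolic_dist_le_of_symm_orbit[OF disc(3,4)] dist_a dist_t by metis
    ultimately show "a = hyperbolic_double t"
      by simp
  next
    assume a_eq: "a = hyperbolic_double t"
    have "Moebius_function 0 (- ?t) ?t = ?a" "Moebius_function 0 (- ?t) (- ?t) = 0"
      using a_eq Moebius_function_of_real[of "- t" t]
      by (simp_all add: hyperbolic_double_def Moebius_function_eq_zero)
    then show "symm_orbit (?a, 0) = symm_orbit (0, - (?t * ?t))"
      using symm_orbit_Moebius[of "- ?t", OF _ disc(3,4)] disc by (simp add: unit_disc_def)
  qed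
qed

lemma hyperbolic_double_in_unit_interval:
  assumes "t \<in> {0<..<1}"
  shows "hyperbolic_double t \<in> {0<..<1}"
proof -
  have "0 < (1 - t)\<^sup>2"
    using assms by simp
  then have "2 * t < 1 + t * t"
    by (simp add: power2_eq_square algebra_simps)
  then show ?thesis
    using assms by (simp add: hyperbolic_double_def add_pos_nonneg)
qed

lemma hyperbolic_half_in_unit_interval:
  assumes t: "t \<in> {0<..<1}"
  shows "hyperbolic_half t \<in> {0<..<1}"
proof -
  have "(1 - t)\<^sup>2 < 1 - t * t"
    using t by (simp add: power2_eq_square algebra_simps)
  then have "1 - t < sqrt (1 - t * t)"
    using t real_less_rsqrt by simp
  moreover have "sqrt (1 - t * t) < 1"
    using t by simp
  ultimately show ?thesis
    using t by (simp add: hyperbolic_half_def field_simps)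
qed

lemma hyperbolic_half_double:
  assumes t: "t \<in> {0<..<1}"
  shows "hyperbolic_half (hyperbolic_double t) = t"
proof -
  have pos: "0 < 1 + t * t"
    by (simp add: add_pos_nonneg)
  have "1 - hyperbolic_double t * hyperbolic_double t = ((1 - t * t) / (1 + t * t))\<^sup>2"
    using pos unfolding hyperbolic_double_def by (simp add: divide_simps) algebra
  moreover have "0 \<le> 1 - t * t"
    using t mult_strict_mono[of t 1 t 1] by auto
  ultimately have "sqrt (1 - hyperbolic_double t * hyperbolic_double t) = (1 - t * t) / (1 + t * t)"
    using pos by simp
  then show ?thesis
    using t pos by (simp add: hyperbolic_half_def hyperbolic_double_def field_simps)
qed

lemma hyperbolic_double_half:
  assumes t: "t \<in> {0<..<1}"
  shows "hyperbolic_double (hyperbolic_half t) = t"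
proof -
  define s where "s = sqrt (1 - t * t)"
  have ss: "s * s = 1 - t * t" and "s < 1"
    using t mult_strict_mono[of t 1 t 1] by (auto simp: s_def)
  have h: "hyperbolic_half t = (1 - s) / t"
    by (simp add: hyperbolic_half_def s_def)
  have "1 + hyperbolic_half t * hyperbolic_half t = 2 * (1 - s) / (t * t)"
    using t unfolding h by (simp add: divide_simps) (use ss in algebra)
  then show ?thesis
    using t \<open>s < 1\<close> unfolding hyperbolic_double_def h by (simp add: divide_simps)
qed

inductive generated_fun_algebra :: "('a \<Rightarrow> 'b::comm_ring_1) set \<Rightarrow> ('a \<Rightarrow> 'b) \<Rightarrow> bool"
  for G :: "('a \<Rightarrow> 'b) set" where
  generator: "g \<in> G \<Longrightarrow> generated_fun_algebra G g"
| const: "generated_fun_algebra G (\<lambda>x. c)"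
| add: "generated_fun_algebra G f \<Longrightarrow> generated_fun_algebra G g \<Longrightarrow>
    generated_fun_algebra G (\<lambda>x. f x + g x)"
| mult: "generated_fun_algebra G f \<Longrightarrow> generated_fun_algebra G g \<Longrightarrow>
    generated_fun_algebra G (\<lambda>x. f x * g x)"

lemma generated_fun_algebra_has_derivative:
  assumes gens: "\<And>g. g \<in> G \<Longrightarrow>
      \<exists>g'. generated_fun_algebra G g' \<and> (\<forall>x\<in>S. (g has_real_derivative g' x) (at x))"
    and "generated_fun_algebra G f"
  shows "\<exists>f'. generated_fun_algebra G f' \<and> (\<forall>x\<in>S. (f has_real_derivative f' x) (at x))"
  using assms(2)
proof induction
  case (generator g)
  then show ?case by (rule gens)
next
  case (const c)
  show ?case
    by (intro exI[of _ "\<lambda>x. 0"] conjI generated_fun_algebra.const) auto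
next
  case (add f g)
  then obtain f' g' where "generated_fun_algebra G f'" "generated_fun_algebra G g'"
    "\<forall>x\<in>S. (f has_real_derivative f' x) (at x)" "\<forall>x\<in>S. (g has_real_derivative g' x) (at x)"
    by blast
  then show ?case
    by (intro exI[of _ "\<lambda>x. f' x + g' x"] conjI generated_fun_algebra.add)
       (auto intro!: derivative_eq_intros)
next
  case (mult f g)
  then obtain f' g' where "generated_fun_algebra G f'" "generated_fun_algebra G g'"
    "\<forall>x\<in>S. (f has_real_derivative f' x) (at x)" "\<forall>x\<in>S. (g has_real_derivative g' x) (at x)"
    by blast
  with mult.hyps show ?case
    by (intro exI[of _ "\<lambda>x. f' x * g x + f x * g' x"] conjI generated_fun_algebra.add
          generated_fun_algebra.mult)
       (auto intro!: derivative_eq_intros)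
qed

lemma smooth_on_generated_fun_algebra:
  assumes S: "open S"
    and gens: "\<And>g. g \<in> G \<Longrightarrow>
      \<exists>g'. generated_fun_algebra G g' \<and> (\<forall>x\<in>S. (g has_real_derivative g' x) (at x))"
    and g: "generated_fun_algebra G g" and fg: "\<And>x. x \<in> S \<Longrightarrow> f x = g x"
  shows "smooth_on S f"
proof -
  note has_derivative = generated_fun_algebra_has_derivative[OF gens]
  have deriv_agrees: "\<exists>h. generated_fun_algebra G h \<and> (\<forall>x\<in>S. (deriv ^^ n) f x = h x)" for n
  proof (induction n)
    case 0
    show ?case
      using g fg by auto
  next
    case (Suc n)
    then obtain h h' where "generated_fun_algebra G h'" and h: "\<forall>x\<in>S. (deriv ^^ n) f x = h x"
      and h': "\<forall>x\<in>S. (h has_real_derivative h' x) (at x)"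
      using has_derivative by blast
    moreover have "(deriv ^^ Suc n) f x = h' x" if "x \<in> S" for x
      using has_field_derivative_transform_within_open[OF h'[rule_format, OF that] S that] h
      by (simp add: DERIV_imp_deriv)
    ultimately show ?case
      by blast
  qed
  show ?thesis
    unfolding smooth_on_def
  proof (intro allI ballI)
    fix n x assume x: "x \<in> S"
    obtain h h' where h: "\<forall>x\<in>S. (deriv ^^ n) f x = h x"
      and h': "\<forall>x\<in>S. (h has_real_derivative h' x) (at x)"
      using deriv_agrees has_derivative by blast
    then have "((deriv ^^ n) f has_real_derivative h' x) (at x)"
      using has_field_derivative_transform_within_open[OF h'[rule_format, OF x] S x] by simp
    then show "(deriv ^^ n) f differentiable (at x)"
      using real_differentiable_def by blast
  qed
qed

definition unit_interval_generators :: "(real \<Rightarrow> real) set" where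
  "unit_interval_generators = {\<lambda>x. x, \<lambda>x. 1 / x, \<lambda>x. sqrt (1 - x * x),
     \<lambda>x. 1 / sqrt (1 - x * x), \<lambda>x. 1 / (1 + x * x)}"

lemma unit_interval_generators_generated:
  "generated_fun_algebra unit_interval_generators (\<lambda>x. x)"
  "generated_fun_algebra unit_interval_generators (\<lambda>x. 1 / x)"
  "generated_fun_algebra unit_interval_generators (\<lambda>x. sqrt (1 - x * x))"
  "generated_fun_algebra unit_interval_generators (\<lambda>x. 1 / sqrt (1 - x * x))"
  "generated_fun_algebra unit_interval_generators (\<lambda>x. 1 / (1 + x * x))"
  by (auto intro: generated_fun_algebra.generator simp: unit_interval_generators_def)

lemma unit_interval_generators_has_derivative:
  assumes "g \<in> unit_interval_generators"
  shows "\<exists>g'. generated_fun_algebra unit_interval_generators g' \<and>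
    (\<forall>x\<in>{0<..<1}. (g has_real_derivative g' x) (at x))"
proof -
  let ?A = "generated_fun_algebra unit_interval_generators"
  have witness: "\<exists>g'. ?A g' \<and> (\<forall>x\<in>{0<..<1}. (g has_real_derivative g' x) (at x))"
    if "?A g'" and "\<And>x. 0 < x \<Longrightarrow> x < 1 \<Longrightarrow> (g has_real_derivative g' x) (at x)" for g'
    using that by auto
  have root: "0 < 1 - x * x" if "0 < x" "x < (1::real)" for x
    using that mult_strict_mono[of x 1 x 1] by auto
  from assms consider "g = (\<lambda>x. x)" | "g = (\<lambda>x. 1 / x)" | "g = (\<lambda>x. sqrt (1 - x * x))"
    | "g = (\<lambda>x. 1 / sqrt (1 - x * x))" | "g = (\<lambda>x. 1 / (1 + x * x))"
    unfolding unit_interval_generators_def by blast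
  then show ?thesis
  proof cases
    case 1
    show ?thesis
      by (rule witness[of "\<lambda>x. 1"]) (auto intro: generated_fun_algebra.const simp: 1)
  next
    case 2
    show ?thesis
    proof (rule witness[of "\<lambda>x. (- 1) * (1 / x) * (1 / x)"])
      show "?A (\<lambda>x. (- 1) * (1 / x) * (1 / x))"
        by (intro generated_fun_algebra.mult generated_fun_algebra.const
            unit_interval_generators_generated)
      show "(g has_real_derivative (- 1) * (1 / x) * (1 / x)) (at x)" if "0 < x" for x
        using that by (auto intro!: derivative_eq_intros simp: 2 field_simps)
    qed
  next
    case 3
    show ?thesis
    proof (rule witness[of "\<lambda>x. (- 1) * x * (1 / sqrt (1 - x * x))"])
      show "?A (\<lambda>x. (- 1) * x * (1 / sqrt (1 - x * x)))"
        by (intro generated_fun_algebra.mult generated_fun_algebra.const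
            unit_interval_generators_generated)
      show "(g has_real_derivative (- 1) * x * (1 / sqrt (1 - x * x))) (at x)"
        if "0 < x" "x < 1" for x
        using root[OF that] by (auto intro!: derivative_eq_intros simp: 3 field_simps)
    qed
  next
    case 4
    let ?r = "\<lambda>x. 1 / sqrt (1 - x * x)"
    show ?thesis
    proof (rule witness[of "\<lambda>x. x * ?r x * ?r x * ?r x"])
      show "?A (\<lambda>x. x * ?r x * ?r x * ?r x)"
        by (intro generated_fun_algebra.mult unit_interval_generators_generated)
      show "(g has_real_derivative x * ?r x * ?r x * ?r x) (at x)" if "0 < x" "x < 1" for x
        using root[OF that] by (auto intro!: derivative_eq_intros simp: 4 field_simps)
    qed
  next
    case 5
    let ?q = "\<lambda>x. 1 / (1 + x * x)"
    show ?thesis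
    proof (rule witness[of "\<lambda>x. (- 2) * x * ?q x * ?q x"])
      show "?A (\<lambda>x. (- 2) * x * ?q x * ?q x)"
        by (intro generated_fun_algebra.mult generated_fun_algebra.const
            unit_interval_generators_generated)
      show "(g has_real_derivative (- 2) * x * ?q x * ?q x) (at x)" for x
        using add_pos_nonneg[of 1 "x * x"]
        by (auto intro!: derivative_eq_intros simp: 5 field_simps power2_eq_square)
    qed
  qed
qed

lemma smooth_on_unit_interval:
  assumes "generated_fun_algebra unit_interval_generators g"
    and "\<And>x. x \<in> {0<..<1} \<Longrightarrow> f x = g x"
  shows "smooth_on {0<..<1} f"
  using smooth_on_generated_fun_algebra[OF _ unit_interval_generators_has_derivative assms] by simp

lemma real_diffeomorphism_hyperbolic_half:
  assumes F: "\<And>t. t \<in> {0<..<1} \<Longrightarrow> F t = hyperbolic_half t"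
  shows "real_diffeomorphism {0<..<1} {0<..<1} F"
proof -
  let ?I = "{0<..<1::real}" and ?A = "generated_fun_algebra unit_interval_generators"
  have bij: "bij_betw F ?I ?I"
  proof (rule bij_betw_byWitness[where f' = hyperbolic_double])
    show "\<forall>t\<in>?I. hyperbolic_double (F t) = t"
      using F hyperbolic_double_half by simp
    show "\<forall>t\<in>?I. F (hyperbolic_double t) = t"
      using F hyperbolic_double_in_unit_interval hyperbolic_half_double by simp
    show "F ` ?I \<subseteq> ?I" "hyperbolic_double ` ?I \<subseteq> ?I"
      using F hyperbolic_half_in_unit_interval hyperbolic_double_in_unit_interval by auto
  qed
  have "smooth_on ?I F"
  proof (rule smooth_on_unit_interval[of "\<lambda>x. (1 + (- 1) * sqrt (1 - x * x)) * (1 / x)"])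
    show "?A (\<lambda>x. (1 + (- 1) * sqrt (1 - x * x)) * (1 / x))"
      by (intro generated_fun_algebra.mult generated_fun_algebra.add generated_fun_algebra.const
          unit_interval_generators_generated)
    show "F x = (1 + (- 1) * sqrt (1 - x * x)) * (1 / x)" if "x \<in> ?I" for x
      using that by (simp add: F hyperbolic_half_def)
  qed
  moreover have "smooth_on ?I (inv_into ?I F)"
  proof (rule smooth_on_unit_interval[of "\<lambda>x. 2 * x * (1 / (1 + x * x))"])
    show "?A (\<lambda>x. 2 * x * (1 / (1 + x * x)))"
      by (intro generated_fun_algebra.mult generated_fun_algebra.const
          unit_interval_generators_generated)
    show "inv_into ?I F x = 2 * x * (1 / (1 + x * x))" if "x \<in> ?I" for x
      using bij that hyperbolic_double_in_unit_interval[OF that] hyperbolic_half_double[OF that]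
      by (intro inv_into_f_eq) (auto simp: bij_betw_def F hyperbolic_double_def)
  qed
  ultimately show ?thesis
    using bij by (simp add: real_diffeomorphism_def)
qed

theorem lemma2p9:
  shows "(\<forall>a \<in> {0<..<1::real}. \<exists>!b. b \<in> {0<..<1::real} \<and>
            symm_orbit (complex_of_real a, 0) = symm_orbit (0, - (complex_of_real b * complex_of_real b)))
       \<and> real_diffeomorphism {0<..<1} {0<..<1}
           (\<lambda>a. THE b. b \<in> {0<..<1::real} \<and>
              symm_orbit (complex_of_real a, 0) = symm_orbit (0, - (complex_of_real b * complex_of_real b)))"
proof -
  let ?P = "\<lambda>a b. b \<in> {0<..<1::real} \<and>
    symm_orbit (complex_of_real a, 0) = symm_orbit (0, - (complex_of_real b * complex_of_real b))"
  have P_iff: "?P a b \<longleftrightarrow> b = hyperbolic_half a" if a: "a \<in> {0<..<1}" for a b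
  proof
    assume "?P a b"
    then show "b = hyperbolic_half a"
      using symm_orbit_real_eq_iff[OF a] hyperbolic_half_double by metis
  next
    assume "b = hyperbolic_half a"
    then show "?P a b"
      using symm_orbit_real_eq_iff[OF a] hyperbolic_half_in_unit_interval[OF a]
        hyperbolic_double_half[OF a] by metis
  qed
  then have "\<exists>!b. ?P a b" if "a \<in> {0<..<1}" for a
    using that by auto
  moreover have "real_diffeomorphism {0<..<1} {0<..<1} (\<lambda>a. THE b. ?P a b)"
    using P_iff by (intro real_diffeomorphism_hyperbolic_half) auto
  ultimately show ?thesis
    by blast
qed

end
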